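(* Let $\Omega_h\subset\mathbb{R}^2$ be a simply connected polygon with a regular triangulation $\mathcal{T}_h$, and let $x^{(1)},\dots,x^{(N)}$ be its boundary vertices in counterclockwise order, $X=(x^{(1)},\dots,x^{(N)})$. Let $t^0>0$, $\mu,\lambda,\delta>0$, $M>0$, and let $\ell:\mathcal{S}^1(\mathcal{T}_h)^2\to\mathbb{R}$ be a linear functional (the discrete shape derivative $J_h'(\Omega_h;\cdot)$). Let $(V_h,F_h)$ be a solution of the convex quadratic program \[ \begin{aligned} &\text{minimize } \tfrac12\mathcal{E}_h(V_h,V_h)+\ell(V_h) \text{ over } V_h\in\mathcal{S}^1(\mathcal{T}_h)^2,\ F_h\in\mathcal{S}^1(\partial\mathcal{T}_h),\\ &\text{s.t. } C_i(X)+t^0\,DC_i(X)\,V_h(X)\le 0\ (i=1,\dots,N),\qquad \mathcal{E}_h(V_h,W_h)=\int_{\partial\Omega_h}F_h\,(W_h\cdot n)\,ds\ \ \forall W_h\in\mathcal{S}^1(\mathcal{T}_h)^2, \end{aligned} \] with $V_h\ne0$, and let $\lambda=(\lambda_1,\dots,\lambda_N)\in\mathbb{R}^N$ be a Lagrange multiplier for $V_h$ associated with the linearized convexity constraints. If $M\ge t^0\sup_{i=1,\dots,N}\lambda_i$, then \[ \varphi'(0):=\ell(V_h)+M\sum_{i:\,C_i(X)=0}\bigl[DC_i(X)V_h(X)\bigr]^+ + M\sum_{i:\,C_i(X)>0}DC_i(X)V_h(X)<0 . \]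
   Context: $\mathcal{S}^1(\mathcal{T}_h)$ denotes continuous elementwise affine functions on $\mathcal{T}_h$, $\mathcal{S}^1(\partial\mathcal{T}_h)$ continuous piecewise affine functions on $\partial\Omega_h$, $n$ the outer unit normal. $\mathcal{E}_h(V,W)=\int_{\Omega_h}2\mu\,\varepsilon(V):\varepsilon(W)+\lambda\,\mathrm{tr}\,\varepsilon(V)\,\mathrm{tr}\,\varepsilon(W)+\delta\,V\cdot W\,dx$ with $\varepsilon(V)=(DV+DV^\top)/2$ (here $\lambda$ in $\mathcal{E}_h$ is the Lamé parameter, distinct from the multiplier vector). With conventions $x^{(0)}=x^{(N)}$, $x^{(N+1)}=x^{(1)}$, $C_i(X)=(x^{(i-1)}_1-x^{(i)}_1)(x^{(i+1)}_2-x^{(i)}_2)-(x^{(i-1)}_2-x^{(i)}_2)(x^{(i+1)}_1-x^{(i)}_1)$, and $DC_i(X)V_h(X)$ denotes the derivative of $C_i$ at $X$ applied to the vector $(V_h(x^{(1)}),\dots,V_h(x^{(N)}))$. A Lagrange multiplier means: there exist $\lambda\in\mathbb{R}^N$ and $W_h\in\mathcal{S}^1(\mathcal{T}_h)^2$ with $\mathcal{E}_h(V_h,\delta V)+\ell(\delta V)+\sum_i\lambda_i t^0 DC_i(X)\delta V(X)+\mathcal{E}_h(\delta V,W_h)=0$ for all $\delta V\in\mathcal{S}^1(\mathcal{T}_h)^2$, $\int_{\partial\Omega_h}\delta F\,(W_h\cdot n)\,ds=0$ for all $\delta F\in\mathcal{S}^1(\partial\mathcal{T}_h)$, and $0\le\lambda_i\perp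 C_i(X)+t^0DC_i(X)V_h(X)\le0$ for all $i$. The quantity $\varphi'(0)$ is the one-sided derivative at $0$ of the merit function $\varphi(t)=J_h((I+tV_h)(\Omega_h))+M\sum_i[C_i(X+tV_h(X))]^+$ when $\ell=J_h'(\Omega_h;\cdot)$. *)

theory Defs
  imports "HOL-Analysis.Analysis"
begin

type_synonym pt = "real^2"

definition tri_vertices :: "pt set \<Rightarrow> pt set" where
  "tri_vertices K = {v. v extreme_point_of K}"

definition is_triangle :: "pt set \<Rightarrow> bool" where
  "is_triangle K \<longleftrightarrow> (\<exists>a b c. K = convex hull {a, b, c} \<and> \<not> collinear {a, b, c})"

definition regular_triangulation :: "pt set set \<Rightarrow> bool" where
  "regular_triangulation T \<longleftrightarrow> finite T \<and> T \<noteq> {} \<and> (\<forall>K\<in>T. is_triangle K) \<and>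
     (\<forall>K\<in>T. \<forall>K'\<in>T. K \<noteq> K' \<longrightarrow>
        K \<inter> K' = convex hull (tri_vertices K \<inter> tri_vertices K'))"

definition mesh_vertices :: "pt set set \<Rightarrow> pt set" where
  "mesh_vertices T = (\<Union>K\<in>T. tri_vertices K)"

definition domain :: "pt set set \<Rightarrow> pt set" where
  "domain T = \<Union>T"

definition cyc :: "nat \<Rightarrow> (nat \<Rightarrow> pt) \<Rightarrow> nat \<Rightarrow> pt" where
  "cyc N X i = X (if i = 0 then N else if i = N + 1 then 1 else i)"

definition ccw_boundary_vertices :: "pt set set \<Rightarrow> nat \<Rightarrow> (nat \<Rightarrow> pt) \<Rightarrow> bool" where
  "ccw_boundary_vertices T N X \<longleftrightarrow>
     N \<ge> 3 \<and> inj_on X {1..N} \<and>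
     X ` {1..N} = {v \<in> mesh_vertices T. v \<in> frontier (domain T)} \<and>
     frontier (domain T) = (\<Union>i\<in>{1..N}. closed_segment (cyc N X i) (cyc N X (i+1))) \<and>
     (\<forall>i\<in>{1..N}. \<forall>j\<in>{1..N}. i \<noteq> j \<longrightarrow>
        closed_segment (cyc N X i) (cyc N X (i+1)) \<inter> closed_segment (cyc N X j) (cyc N X (j+1))
        \<subseteq> {cyc N X i, cyc N X (i+1)} \<inter> {cyc N X j, cyc N X (j+1)}) \<and>
     (\<Sum>i=1..N. (cyc N X i)$1 * (cyc N X (i+1))$2 - (cyc N X (i+1))$1 * (cyc N X i)$2) > 0"

definition S1 :: "pt set set \<Rightarrow> (pt \<Rightarrow> real) set" where
  "S1 T = {f. continuous_on (domain T) f \<and>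
              (\<forall>K\<in>T. \<exists>a b. \<forall>x\<in>K. f x = a \<bullet> x + b)}"

definition S1vec :: "pt set set \<Rightarrow> (pt \<Rightarrow> pt) set" where
  "S1vec T = {V. \<forall>k. (\<lambda>x. V x $ k) \<in> S1 T}"

definition S1bd :: "nat \<Rightarrow> (nat \<Rightarrow> pt) \<Rightarrow> (pt \<Rightarrow> real) set" where
  "S1bd N X = {F. \<forall>i\<in>{1..N}. \<forall>s\<in>{0..1::real}.
      F (cyc N X i + s *\<^sub>R (cyc N X (i+1) - cyc N X i))
        = (1 - s) * F (cyc N X i) + s * F (cyc N X (i+1))}"

definition jac :: "(pt \<Rightarrow> pt) \<Rightarrow> pt \<Rightarrow> real^2^2" where
  "jac V x = matrix (frechet_derivative V (at x))"

definition strain :: "(pt \<Rightarrow> pt) \<Rightarrow> pt \<Rightarrow> real^2^2" where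
  "strain V x = (1/2) *\<^sub>R (jac V x + transpose (jac V x))"

definition frob :: "real^2^2 \<Rightarrow> real^2^2 \<Rightarrow> real" where
  "frob A B = (\<Sum>i\<in>UNIV. \<Sum>j\<in>UNIV. A$i$j * B$i$j)"

definition mtrace :: "real^2^2 \<Rightarrow> real" where
  "mtrace A = (\<Sum>i\<in>UNIV. A$i$i)"

definition Eh :: "pt set set \<Rightarrow> real \<Rightarrow> real \<Rightarrow> real \<Rightarrow> (pt \<Rightarrow> pt) \<Rightarrow> (pt \<Rightarrow> pt) \<Rightarrow> real" where
  "Eh T mu lam dl V W = integral (domain T) (\<lambda>x.
      2 * mu * frob (strain V x) (strain W x)
      + lam * mtrace (strain V x) * mtrace (strain W x) + dl * (V x \<bullet> W x))"

text \<open>Boundary integral of F (W . n) ds over the ccw polygon boundary. On the edge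
  e = x(i+1) - x(i) the outer unit normal is (e2, -e1)/|e| and ds = |e| ds_param.\<close>
definition bd_int :: "nat \<Rightarrow> (nat \<Rightarrow> pt) \<Rightarrow> (pt \<Rightarrow> real) \<Rightarrow> (pt \<Rightarrow> pt) \<Rightarrow> real" where
  "bd_int N X F W = (\<Sum>i=1..N.
     (let a = cyc N X i; e = cyc N X (i+1) - cyc N X i;
          nn = (vector [e$2, - (e$1)] :: pt)
      in integral {0..1::real} (\<lambda>s. F (a + s *\<^sub>R e) * (W (a + s *\<^sub>R e) \<bullet> nn))))"

definition Cc :: "nat \<Rightarrow> (nat \<Rightarrow> pt) \<Rightarrow> nat \<Rightarrow> real" where
  "Cc N X i = ((cyc N X (i-1))$1 - (cyc N X i)$1) * ((cyc N X (i+1))$2 - (cyc N X i)$2)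
            - ((cyc N X (i-1))$2 - (cyc N X i)$2) * ((cyc N X (i+1))$1 - (cyc N X i)$1)"

definition DCc :: "nat \<Rightarrow> (nat \<Rightarrow> pt) \<Rightarrow> nat \<Rightarrow> (nat \<Rightarrow> pt) \<Rightarrow> real" where
  "DCc N X i Y = deriv (\<lambda>t. Cc N (\<lambda>j. X j + t *\<^sub>R Y j) i) 0"

end

theory Submission
  imports Defs
begin

(* Testing the first KKT equation with dV = V gives
     l(V) = - E(V,V) - E(V,W) - sum_i lm_i t0 DC_i V,
   and E(V,W) = int F (W.n) ds = 0 by the state equation for V and the boundary
   equation for W.  Complementarity rewrites lm_i t0 DC_i V as - lm_i C_i.  For active
   indices (C_i = 0) feasibility forces DC_i V <= 0, so the positive parts vanish; for
   inactive ones lm_i C_i <= 0; for violated ones (C_i > 0) M DC_i V <= - M C_i / t0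
   <= - lm_i C_i because M >= t0 lm_i.  Hence phi'(0) <= - E(V,V), and E(V,V) > 0 since
   delta > 0 and the piecewise affine V is nonzero on an open subset of some triangle. *)

lemma absolutely_integrable_on_compact:
  fixes f :: "'a::euclidean_space \<Rightarrow> real"
  assumes "compact S" "continuous_on S f"
  shows "f absolutely_integrable_on S"
proof (rule absolutely_integrable_onI)
  have "set_integrable lborel S f"
    unfolding set_integrable_def using assms by (rule borel_integrable_compact)
  then show "f integrable_on S"
    by (rule set_borel_integral_eq_integral(1))
  have "set_integrable lborel S (\<lambda>x. norm (f x))"
    unfolding set_integrable_def using assms(1) continuous_on_norm[OF assms(2)]
    by (rule borel_integrable_compact)
  then show "(\<lambda>x. norm (f x)) integrable_on S"
    by (rule set_borel_integral_eq_integral(1))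
qed

lemma absolutely_integrable_on_Union_piecewise_continuous:
  fixes f :: "'a::euclidean_space \<Rightarrow> real"
  assumes "finite \<K>"
    and cells: "\<And>K. K \<in> \<K> \<Longrightarrow> compact K \<and> convex K"
    and cont: "\<And>K. K \<in> \<K> \<Longrightarrow> continuous_on K (g K)"
    and agree: "\<And>K x. K \<in> \<K> \<Longrightarrow> x \<in> interior K \<Longrightarrow> f x = g K x"
  shows "f absolutely_integrable_on \<Union>\<K>"
  using assms(1) cells cont agree
proof (induction rule: finite_induct)
  case empty
  then show ?case by simp
next
  case (insert K \<K>)
  have "g K absolutely_integrable_on K"
    using insert.prems(1,2) by (intro absolutely_integrable_on_compact) auto
  moreover have "negligible (frontier K)"
    using insert.prems(1) by (intro negligible_convex_frontier) auto
  moreover have "f x = g K x" if "x \<in> K - frontier K" for x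
  proof -
    have "x \<in> interior K"
      using that closure_subset[of K] unfolding frontier_def by blast
    then show ?thesis using insert.prems(3)[of K x] by simp
  qed
  ultimately have "f absolutely_integrable_on K"
    by (rule absolutely_integrable_spike)
  moreover have "f absolutely_integrable_on \<Union>\<K>"
    using insert.prems by (intro insert.IH) auto
  ultimately show ?case
    by (simp add: absolutely_integrable_Un)
qed

lemma integral_pos_of_pos_at_interior_point:
  fixes f :: "'a::euclidean_space \<Rightarrow> real"
  assumes f: "f integrable_on S" and nonneg: "\<And>y. y \<in> S \<Longrightarrow> 0 \<le> f y"
    and x: "x \<in> interior S" "isCont f x" "0 < f x"
  shows "0 < integral S f"
proof -
  define c where "c = f x / 2"
  have c: "0 < c" using x(3) by (simp add: c_def)
  obtain d where d: "0 < d" "\<And>y. dist y x < d \<Longrightarrow> dist (f y) (f x) < c"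
    using x(2) c unfolding continuous_at_eps_delta by blast
  obtain r where r: "0 < r" "ball x r \<subseteq> S"
    using x(1) mem_interior by blast
  define e where "e = min d r"
  have e_pos: "0 < e" using d(1) r(1) by (simp add: e_def)
  have e_ball: "y \<in> S \<and> c < f y" if "y \<in> ball x e" for y
  proof -
    have "dist y x < d" "y \<in> ball x r" using that by (auto simp: e_def dist_commute)
    then have "\<bar>f y - f x\<bar> < c" "y \<in> S"
      using d(2)[of y] r(2) by (auto simp: dist_real_def)
    then show ?thesis
      unfolding abs_less_iff c_def by simp
  qed
  define \<phi> where "\<phi> y = (if y \<in> ball x e then c else 0)" for y
  have "(\<lambda>_. 1::real) integrable_on ball x e"
    by (rule integrable_on_const) simp
  then have "((\<lambda>_. 1::real) has_integral measure lebesgue (ball x e)) (ball x e)"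
    unfolding lmeasure_integral[OF lmeasurable_ball] by (rule integrable_integral)
  then have "((\<lambda>_. c) has_integral c * measure lebesgue (ball x e)) (ball x e)"
    using has_integral_mult_right[of "\<lambda>_. 1::real", where c=c] by simp
  moreover have "ball x e \<inter> S = ball x e" using e_ball by auto
  ultimately have "(\<phi> has_integral c * measure lebesgue (ball x e)) S"
    unfolding \<phi>_def has_integral_restrict_Int by simp
  then have "integral S \<phi> = c * measure lebesgue (ball x e)" "\<phi> integrable_on S"
    by (auto simp: integral_unique)
  moreover have "integral S \<phi> \<le> integral S f"
  proof (rule integral_le[OF \<open>\<phi> integrable_on S\<close> f])
    show "\<phi> y \<le> f y" if "y \<in> S" for y
      using e_ball[of y] nonneg[OF that] by (auto simp: \<phi>_def)
  qed
  moreover have "0 < c * measure lebesgue (ball x e)" using c e_pos by simp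
  ultimately show ?thesis by linarith
qed

lemma triangle_compact_convex:
  assumes "is_triangle K"
  shows "compact K" "convex K"
  using assms unfolding is_triangle_def
  by (auto simp: convex_convex_hull intro!: compact_convex_hull[OF finite_imp_compact])

lemma triangle_closure_interior:
  assumes "is_triangle K"
  shows "closure (interior K) = K"
proof -
  obtain a b c where K: "K = convex hull {a, b, c}" and nc: "\<not> collinear {a, b, c}"
    using assms unfolding is_triangle_def by blast
  have dim: "DIM(pt) = 2" by simp
  have "(1/3) *\<^sub>R a + (1/3) *\<^sub>R b + (1/3) *\<^sub>R c \<in> interior K"
    unfolding K interior_convex_hull_3_minimal[OF nc dim]
    by (intro CollectI exI[of _ "1/3::real"]) auto
  then have "interior K \<noteq> {}" by blast
  then have "closure (interior K) = closure K"
    using convex_closure_interior triangle_compact_convex(2)[OF assms] by blast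
  then show ?thesis
    using closure_closed compact_imp_closed triangle_compact_convex(1)[OF assms] by metis
qed

lemma S1vec_affine_on_cell:
  assumes "V \<in> S1vec T" "K \<in> T"
  shows "\<exists>A c. \<forall>x\<in>K. V x = A *v x + c"
proof -
  have "\<forall>k. \<exists>a b. \<forall>x\<in>K. V x $ k = a \<bullet> x + b"
    using assms unfolding S1vec_def S1_def by blast
  then obtain a b where ab: "\<And>k x. x \<in> K \<Longrightarrow> V x $ k = a k \<bullet> x + b k" by metis
  have "\<forall>x\<in>K. V x = (\<chi> k. a k) *v x + (\<chi> k. b k)"
    by (simp add: vec_eq_iff matrix_vector_mul_component ab)
  then show ?thesis by blast
qed

lemma jac_eq_on_interior:
  assumes "\<And>y. y \<in> K \<Longrightarrow> V y = A *v y + c" and "x \<in> interior K"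
  shows "jac V x = A"
proof -
  have "((\<lambda>y. A *v y + c) has_derivative (\<lambda>h. A *v h)) (at x)"
    by (intro has_derivative_add_const bounded_linear_imp_has_derivative matrix_vector_mul_bounded_linear)
  then have "(V has_derivative (\<lambda>h. A *v h)) (at x)"
    by (rule has_derivative_transform_within_open[OF _ open_interior assms(2)])
       (metis assms(1) interior_subset subsetD)
  then show ?thesis
    unfolding jac_def using frechet_derivative_at by (metis matrix_of_matrix_vector_mul)
qed

definition elastic_density :: "real \<Rightarrow> real \<Rightarrow> real \<Rightarrow> real^2^2 \<Rightarrow> pt \<Rightarrow> real" where
  "elastic_density mu lam dl S v = 2 * mu * frob S S + lam * mtrace S * mtrace S + dl * (v \<bullet> v)"

lemma Eh_diag_eq_integral_elastic_density:
  "Eh T mu lam dl V V = integral (domain T) (\<lambda>x. elastic_density mu lam dl (strain V x) (V x))"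
  by (simp add: Eh_def elastic_density_def)

lemma elastic_density_ge:
  assumes "0 \<le> mu" "0 \<le> lam"
  shows "dl * (v \<bullet> v) \<le> elastic_density mu lam dl S v"
proof -
  have "0 \<le> frob S S" unfolding frob_def by (intro sum_nonneg) simp
  then have "0 \<le> 2 * mu * frob S S" using assms(1) by simp
  moreover have "0 \<le> lam * mtrace S * mtrace S" using assms(2) by (simp add: mult.assoc)
  ultimately show ?thesis unfolding elastic_density_def by linarith
qed

lemma S1vec_elastic_density_continuous_on_cell:
  assumes "V \<in> S1vec T" "K \<in> T"
  shows "\<exists>g. continuous_on UNIV g \<and>
           (\<forall>x\<in>interior K. elastic_density mu lam dl (strain V x) (V x) = g x)"
proof -
  obtain A c where Ac: "\<And>x. x \<in> K \<Longrightarrow> V x = A *v x + c"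
    using S1vec_affine_on_cell[OF assms] by blast
  define g where "g x = elastic_density mu lam dl ((1/2) *\<^sub>R (A + transpose A)) (A *v x + c)" for x
  have "continuous_on UNIV g"
    unfolding g_def elastic_density_def
    by (intro continuous_intros linear_continuous_on matrix_vector_mul_linear bounded_linear_intros)
  moreover have "elastic_density mu lam dl (strain V x) (V x) = g x" if x: "x \<in> interior K" for x
  proof -
    have "V x = A *v x + c" using Ac interior_subset x by blast
    moreover have "jac V x = A" using Ac x by (rule jac_eq_on_interior)
    ultimately show ?thesis by (simp add: g_def strain_def)
  qed
  ultimately show ?thesis by blast
qed

lemma S1vec_nonzero_in_interior:
  assumes "V \<in> S1vec T" "K \<in> T" "is_triangle K" "x0 \<in> K" "V x0 \<noteq> 0"
  shows "\<exists>x\<in>interior K. V x \<noteq> 0"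
proof (rule ccontr)
  assume vanish: "\<not> ?thesis"
  obtain A c where Ac: "\<And>x. x \<in> K \<Longrightarrow> V x = A *v x + c"
    using S1vec_affine_on_cell[OF assms(1,2)] by blast
  have "A *v x0 + c = 0"
  proof (rule continuous_constant_on_closure[where f="\<lambda>x. A *v x + c"])
    show "continuous_on (closure (interior K)) (\<lambda>x. A *v x + c)"
      by (intro continuous_intros linear_continuous_on matrix_vector_mul_linear)
    show "A *v y + c = 0" if "y \<in> interior K" for y
      using vanish that Ac[OF interior_subset[THEN subsetD, OF that]] by auto
    show "x0 \<in> closure (interior K)"
      using triangle_closure_interior[OF assms(3)] assms(4) by simp
  qed
  then show False using Ac[OF assms(4)] assms(5) by simp
qed

lemma Eh_diag_pos:
  assumes "finite T" and triangles: "\<And>K. K \<in> T \<Longrightarrow> is_triangle K"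
    and V: "V \<in> S1vec T" and nonzero: "\<exists>x\<in>domain T. V x \<noteq> 0"
    and "0 \<le> mu" "0 \<le> lam" "0 < dl"
  shows "0 < Eh T mu lam dl V V"
proof -
  define f where "f x = elastic_density mu lam dl (strain V x) (V x)" for x
  have "\<forall>K\<in>T. \<exists>g. continuous_on UNIV g \<and> (\<forall>x\<in>interior K. f x = g x)"
    unfolding f_def using S1vec_elastic_density_continuous_on_cell[OF V] by blast
  then obtain g where g_cont: "\<And>K. K \<in> T \<Longrightarrow> continuous_on UNIV (g K)"
    and f_eq_g: "\<And>K x. K \<in> T \<Longrightarrow> x \<in> interior K \<Longrightarrow> f x = g K x"
    by metis
  have f_ge: "dl * (V x \<bullet> V x) \<le> f x" for x
    unfolding f_def using assms(5,6) by (rule elastic_density_ge)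
  have f_nonneg: "0 \<le> f x" for x
    using f_ge[of x] \<open>0 < dl\<close> by (smt (verit) inner_ge_zero mult_nonneg_nonneg)
  have "f absolutely_integrable_on \<Union>T"
    using \<open>finite T\<close> triangle_compact_convex[OF triangles] f_eq_g
      continuous_on_subset[OF g_cont subset_UNIV]
    by (intro absolutely_integrable_on_Union_piecewise_continuous[where g=g]) auto
  then have f_int: "f integrable_on domain T"
    by (simp add: absolutely_integrable_on_def domain_def)
  obtain K x0 where K: "K \<in> T" "x0 \<in> K" "V x0 \<noteq> 0"
    using nonzero unfolding domain_def by blast
  then obtain x where x: "x \<in> interior K" "V x \<noteq> 0"
    using S1vec_nonzero_in_interior[OF V] triangles by blast
  then have "0 < dl * (V x \<bullet> V x)" using \<open>0 < dl\<close> by simp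
  then have "0 < f x" using f_ge[of x] by linarith
  have "\<forall>\<^sub>F y in nhds x. f y = g K y"
    using x(1) f_eq_g[OF K(1)] eventually_nhds open_interior by blast
  moreover have "isCont (g K) x"
    using g_cont[OF K(1)] continuous_on_eq_continuous_at open_UNIV by blast
  ultimately have "isCont f x"
    using isCont_cong by blast
  moreover have "x \<in> interior (domain T)"
    using x(1) K(1) interior_mono[of K "domain T"] unfolding domain_def by blast
  ultimately have "0 < integral (domain T) f"
    using f_int f_nonneg \<open>0 < f x\<close> integral_pos_of_pos_at_interior_point by blast
  then show ?thesis
    by (simp add: Eh_diag_eq_integral_elastic_density f_def[abs_def])
qed

lemma exact_penalty_slope_neg:
  fixes C D lm :: "nat \<Rightarrow> real"
  assumes "finite I" and "0 < t0" and "0 < E"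
    and ell: "ellV = - E - (\<Sum>i\<in>I. lm i * t0 * D i)"
    and feas: "\<And>i. i \<in> I \<Longrightarrow> C i + t0 * D i \<le> 0"
    and lm_nonneg: "\<And>i. i \<in> I \<Longrightarrow> 0 \<le> lm i"
    and compl: "\<And>i. i \<in> I \<Longrightarrow> lm i * (C i + t0 * D i) = 0"
    and M: "\<And>i. i \<in> I \<Longrightarrow> t0 * lm i \<le> M"
  shows "ellV + M * (\<Sum>i\<in>{i\<in>I. C i = 0}. max 0 (D i)) + M * (\<Sum>i\<in>{i\<in>I. 0 < C i}. D i) < 0"
proof -
  have active: "(\<Sum>i\<in>{i\<in>I. C i = 0}. max 0 (D i)) = 0"
  proof (rule sum.neutral, clarify)
    fix i assume "i \<in> I" "C i = 0"
    then have "D i \<le> 0" using feas[of i] \<open>0 < t0\<close> by (simp add: mult_le_0_iff)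
    then show "max 0 (D i) = 0" by simp
  qed
  have term_nonpos: "lm i * C i + (if 0 < C i then M * D i else 0) \<le> 0" if i: "i \<in> I" for i
  proof (cases "0 < C i")
    case True
    have "t0 * lm i * C i \<le> M * C i"
      using M[OF i] True by (simp add: mult_right_mono)
    moreover have "M * (C i + t0 * D i) \<le> 0"
      using feas[OF i] M[OF i] lm_nonneg[OF i] \<open>0 < t0\<close>
      by (intro mult_nonneg_nonpos) (auto intro: order_trans[rotated] simp: zero_le_mult_iff)
    ultimately have "t0 * (lm i * C i + M * D i) \<le> 0"
      by (simp add: algebra_simps)
    then show ?thesis using True \<open>0 < t0\<close> by (simp add: mult_le_0_iff)
  next
    case False
    then show ?thesis using lm_nonneg[OF i] by (simp add: mult_nonneg_nonpos)
  qed
  have "lm i * t0 * D i = - (lm i * C i)" if "i \<in> I" for i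
    using compl[OF that] by (simp add: algebra_simps)
  then have "ellV + M * (\<Sum>i\<in>{i\<in>I. 0 < C i}. D i)
      = - E + (\<Sum>i\<in>I. lm i * C i + (if 0 < C i then M * D i else 0))"
    using \<open>finite I\<close>
    by (simp add: ell sum.distrib sum_distrib_left sum.inter_filter[symmetric] sum_negf)
  also have "\<dots> < 0"
    using term_nonpos \<open>0 < E\<close> by (smt (verit) sum_nonpos)
  finally show ?thesis by (simp add: active)
qed

theorem mainTheorem4:
  fixes T :: "pt set set" and N :: nat and X :: "nat \<Rightarrow> pt"
    and t0 mu lam dl M :: real
    and ell :: "(pt \<Rightarrow> pt) \<Rightarrow> real"
    and V :: "pt \<Rightarrow> pt" and F :: "pt \<Rightarrow> real"
    and lm :: "nat \<Rightarrow> real" and W :: "pt \<Rightarrow> pt"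
  assumes mesh: "regular_triangulation T"
    and simply_conn: "simply_connected (domain T)"
    and bdry: "ccw_boundary_vertices T N X"
    and pos: "t0 > 0" "mu > 0" "lam > 0" "dl > 0" "M > 0"
    and ell_lin: "\<forall>a b U U'. U \<in> S1vec T \<longrightarrow> U' \<in> S1vec T \<longrightarrow>
                    ell (\<lambda>x. a *\<^sub>R U x + b *\<^sub>R U' x) = a * ell U + b * ell U'"
    and feasV: "V \<in> S1vec T" "F \<in> S1bd N X"
    and feas_conv: "\<forall>i\<in>{1..N}. Cc N X i + t0 * DCc N X i (\<lambda>j. V (X j)) \<le> 0"
    and feas_eq: "\<forall>U\<in>S1vec T. Eh T mu lam dl V U = bd_int N X F U"
    and optimal: "\<forall>V'\<in>S1vec T. \<forall>F'\<in>S1bd N X.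
                    (\<forall>i\<in>{1..N}. Cc N X i + t0 * DCc N X i (\<lambda>j. V' (X j)) \<le> 0) \<longrightarrow>
                    (\<forall>U\<in>S1vec T. Eh T mu lam dl V' U = bd_int N X F' U) \<longrightarrow>
                    1/2 * Eh T mu lam dl V V + ell V \<le> 1/2 * Eh T mu lam dl V' V' + ell V'"
    and V_nonzero: "\<exists>x\<in>domain T. V x \<noteq> 0"
    and W_space: "W \<in> S1vec T"
    and mult_eq: "\<forall>dV\<in>S1vec T. Eh T mu lam dl V dV + ell dV
                    + (\<Sum>i=1..N. lm i * t0 * DCc N X i (\<lambda>j. dV (X j)))
                    + Eh T mu lam dl dV W = 0"
    and mult_bd: "\<forall>dF\<in>S1bd N X. bd_int N X dF W = 0"
    and compl: "\<forall>i\<in>{1..N}. 0 \<le> lm i \<and>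
                  lm i * (Cc N X i + t0 * DCc N X i (\<lambda>j. V (X j))) = 0"
    and M_big: "M \<ge> t0 * Max (lm ` {1..N})"
  shows "ell V + M * (\<Sum>i\<in>{i\<in>{1..N}. Cc N X i = 0}. max 0 (DCc N X i (\<lambda>j. V (X j))))
           + M * (\<Sum>i\<in>{i\<in>{1..N}. Cc N X i > 0}. DCc N X i (\<lambda>j. V (X j))) < 0"
proof -
  have E_VW: "Eh T mu lam dl V W = 0"
    using feas_eq W_space mult_bd feasV(2) by auto
  have "finite T" "\<And>K. K \<in> T \<Longrightarrow> is_triangle K"
    using mesh unfolding regular_triangulation_def by auto
  then have E_pos: "0 < Eh T mu lam dl V V"
    using feasV(1) V_nonzero pos by (intro Eh_diag_pos) auto
  have ell_V: "ell V = - Eh T mu lam dl V V - (\<Sum>i=1..N. lm i * t0 * DCc N X i (\<lambda>j. V (X j)))"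
    using mult_eq feasV(1) E_VW by force
  have M_ge: "t0 * lm i \<le> M" if "i \<in> {1..N}" for i
  proof -
    have "lm i \<le> Max (lm ` {1..N})" using that by (intro Max_ge) auto
    then show ?thesis using M_big pos(1) by (smt (verit) mult_left_mono)
  qed
  show ?thesis
    by (rule exact_penalty_slope_neg[OF finite_atLeastAtMost pos(1) E_pos ell_V])
       (use feas_conv compl M_ge in auto)
qed

end
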